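(* In the Schwarzschild spacetime with line element $$ds^2=-\left(1-\frac{2m}{r}\right)dt^2+\left(1-\frac{2m}{r}\right)^{-1}dr^2+r^2\left(d\theta^2+\sin^2\theta\, d\varphi^2\right)$$ ($m>0$, $r>2m$, $0<\theta<\pi$), let $p=(t_0,r_0,\theta_0,\varphi_0)$ be an event of a stationary observer with 4-velocity $u=U_p$, where $U=\left(1-\frac{2m}{r}\right)^{-1/2}\frac{\partial}{\partial t}$. Let a test particle have 4-velocity $u'$ at the event $q=(t_0,r_1,\theta_1,\varphi_1)$, and let $u'^t$ denote the $t$-component of $u'$. Let $v_{\mathrm{kin}}$ be the kinematic relative velocity of $u'$ with respect to $u$ (defined with respect to any spacelike geodesic segment $\psi$ from $p$ to $q$ whose tangent at $p$ is orthogonal to $u$), and let $v$ be the usual relative velocity of $u'$ with respect to $U_q$. Then $$\|v_{\mathrm{kin}}\|^2=\|v\|^2=1-\frac{r_1}{(r_1-2m)\,(u'^t)^2}.$$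
   Context: Signature $(-,+,+,+)$, $c=1$; for spacelike $x$, $\|x\|=g(x,x)^{1/2}$. An observer at an event is a future-pointing unit timelike vector. Given an observer $u$ at $p$, a test particle with 4-velocity $u'$ at $q$, and a spacelike geodesic segment $\psi$ from $p$ to $q$ orthogonal to $u$ at $p$, let $\tau_{qp}$ denote parallel transport from $q$ to $p$ along $\psi$. The kinematic relative velocity of $u'$ with respect to $u$ is $$v_{\mathrm{kin}}=\frac{1}{-g(\tau_{qp}u',u)}\tau_{qp}u'-u .$$ When $u,u'$ lie in the same tangent space, the usual relative velocity of $u'$ with respect to $u$ is $v=\frac{1}{-g(u',u)}u'-u$. Stationary observers are those with constant $r,\theta,\varphi$; their 4-velocity field is $U$. *)

theory Defs
  imports "HOL-Analysis.Analysis"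
begin

text \<open>Schwarzschild spacetime in coordinates x = (t, r, theta, phi),
  stored as x$0, x$1, x$2, x$3 of a vector in real^4.  Signature (-,+,+,+).\<close>

definition sch_dom :: "real \<Rightarrow> real^4 \<Rightarrow> bool" where
  "sch_dom m x \<longleftrightarrow> 2 * m < x$1 \<and> 0 < x$2 \<and> x$2 < pi"

definition sch_f :: "real \<Rightarrow> real \<Rightarrow> real" where
  "sch_f m r = 1 - 2 * m / r"

definition sch_g :: "real \<Rightarrow> real^4 \<Rightarrow> real^4 \<Rightarrow> real^4 \<Rightarrow> real" where
  "sch_g m x a b =
     - sch_f m (x$1) * a$0 * b$0
     + inverse (sch_f m (x$1)) * a$1 * b$1
     + (x$1)^2 * a$2 * b$2
     + (x$1)^2 * (sin (x$2))^2 * a$3 * b$3"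

definition sch_gc :: "real \<Rightarrow> real^4 \<Rightarrow> 4 \<Rightarrow> 4 \<Rightarrow> real" where
  "sch_gc m x i j = sch_g m x (axis i 1) (axis j 1)"

definition sch_ginv :: "real \<Rightarrow> real^4 \<Rightarrow> 4 \<Rightarrow> 4 \<Rightarrow> real" where
  "sch_ginv m x k l = matrix_inv (\<chi> i j. sch_gc m x i j) $ k $ l"

definition sch_dg :: "real \<Rightarrow> real^4 \<Rightarrow> 4 \<Rightarrow> 4 \<Rightarrow> 4 \<Rightarrow> real" where
  "sch_dg m x l i j = deriv (\<lambda>s. sch_gc m (x + s *\<^sub>R axis l 1) i j) 0"

definition sch_Gamma :: "real \<Rightarrow> real^4 \<Rightarrow> 4 \<Rightarrow> 4 \<Rightarrow> 4 \<Rightarrow> real" where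
  "sch_Gamma m x k i j =
     (1/2) * (\<Sum>l\<in>UNIV. sch_ginv m x k l *
        (sch_dg m x i l j + sch_dg m x j l i - sch_dg m x l i j))"

definition sch_christ :: "real \<Rightarrow> real^4 \<Rightarrow> real^4 \<Rightarrow> real^4 \<Rightarrow> real^4" where
  "sch_christ m x a b = (\<chi> k. \<Sum>i\<in>UNIV. \<Sum>j\<in>UNIV. sch_Gamma m x k i j * a$i * b$j)"

definition sch_geodesic :: "real \<Rightarrow> (real \<Rightarrow> real^4) \<Rightarrow> real \<Rightarrow> real \<Rightarrow> bool" where
  "sch_geodesic m \<psi> a b \<longleftrightarrow> a < b \<and>
     (\<forall>s\<in>{a..b}. sch_dom m (\<psi> s) \<and> \<psi> differentiable (at s within {a..b}) \<and>
        ((\<lambda>\<sigma>. vector_derivative \<psi> (at \<sigma> within {a..b})) has_vector_derivative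
           (- sch_christ m (\<psi> s) (vector_derivative \<psi> (at s within {a..b}))
                                 (vector_derivative \<psi> (at s within {a..b}))))
          (at s within {a..b}))"

definition sch_parallel :: "real \<Rightarrow> (real \<Rightarrow> real^4) \<Rightarrow> (real \<Rightarrow> real^4) \<Rightarrow> real \<Rightarrow> real \<Rightarrow> bool" where
  "sch_parallel m \<psi> V a b \<longleftrightarrow>
     (\<forall>s\<in>{a..b}. (V has_vector_derivative
           (- sch_christ m (\<psi> s) (vector_derivative \<psi> (at s within {a..b})) (V s)))
          (at s within {a..b}))"

definition sch_U :: "real \<Rightarrow> real^4 \<Rightarrow> real^4" where
  "sch_U m x = (1 / sqrt (sch_f m (x$1))) *\<^sub>R axis 0 1"

definition sch_4velocity :: "real \<Rightarrow> real^4 \<Rightarrow> real^4 \<Rightarrow> bool" where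
  "sch_4velocity m x w \<longleftrightarrow> sch_g m x w w = -1 \<and> sch_g m x w (sch_U m x) < 0"

definition rel_vel :: "real \<Rightarrow> real^4 \<Rightarrow> real^4 \<Rightarrow> real^4 \<Rightarrow> real^4" where
  "rel_vel m x w' w = (1 / (- sch_g m x w' w)) *\<^sub>R w' - w"

definition sch_norm :: "real \<Rightarrow> real^4 \<Rightarrow> real^4 \<Rightarrow> real" where
  "sch_norm m x a = sqrt (sch_g m x a a)"

end

theory Submission
  imports Defs
begin

text \<open>The segment \<open>\<psi>\<close> starts orthogonally to the static Killing field, so its conserved energy
  \<open>f \<cdot> dt/ds\<close> (with \<open>f = 1 - 2m/r\<close>) vanishes and \<open>\<psi>\<close> stays in the slice \<open>t = t\<^sub>0\<close>.
  Along such a curve the only Christoffel symbol acting on the \<open>t\<close>-component of a parallel field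
  is \<open>\<Gamma>\<^sup>t\<^sub>t\<^sub>r = m/(r\<^sup>2 f)\<close>, which makes \<open>\<surd>f \<cdot> V\<^sup>t\<close> constant; parallel transport also keeps
  \<open>g(V,V) = -1\<close>. For a unit timelike \<open>w\<close> the relative velocity with respect to the static observer
  satisfies \<open>\<parallel>v\<parallel>\<^sup>2 = 1 - 1/(f (w\<^sup>t)\<^sup>2)\<close>, and \<open>f (w\<^sup>t)\<^sup>2\<close> takes the same value at \<open>p\<close> for the
  transported vector as at \<open>q\<close> for \<open>u'\<close>.\<close>

lemma UNIV_4_from_0: "(UNIV :: 4 set) = {0, 1, 2, 3}"
proof -
  have "i = 0 \<or> i = 1 \<or> i = 2 \<or> i = (3 :: 4)" for i
    using exhaust_4[of i] by auto
  then show ?thesis by auto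
qed

lemma sum_4_from_0: "sum f (UNIV :: 4 set) = f 0 + f 1 + f 2 + f 3"
  unfolding UNIV_4_from_0 by (simp add: ac_simps)

lemma exhaust_4_from_0: "(i :: 4) = 0 \<or> i = 1 \<or> i = 2 \<or> i = 3"
  using UNIV_4_from_0 by auto

lemma sum_if_eq_times:
  "(\<Sum>l\<in>UNIV. (if k = l then c else 0) * h l) = (c :: 'b :: semiring_0) * h (k :: 'a :: finite)"
proof -
  have "(\<Sum>l\<in>UNIV. (if k = l then c else 0) * h l) = (\<Sum>l\<in>UNIV. if k = l then c * h l else 0)"
    by (rule sum.cong) auto
  then show ?thesis by simp
qed

lemma matrix_inv_unique:
  fixes A B :: "'a :: comm_ring_1^'n^'n"
  assumes "A ** B = mat 1" "B ** A = mat 1"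
  shows "matrix_inv A = B"
proof -
  have "\<exists>C. A ** C = mat 1 \<and> C ** A = mat 1" using assms by blast
  then have C: "A ** matrix_inv A = mat 1 \<and> matrix_inv A ** A = mat 1"
    unfolding matrix_inv_def by (rule someI_ex)
  have "matrix_inv A = matrix_inv A ** (A ** B)" using assms by simp
  also have "\<dots> = B" using C by (simp add: matrix_mul_assoc)
  finally show ?thesis .
qed

lemma vec_nth_has_real_derivative:
  "(f has_vector_derivative f') F \<Longrightarrow> ((\<lambda>s. f s $ i) has_real_derivative f' $ i) F"
  unfolding has_real_derivative_iff_has_vector_derivative
  by (rule bounded_linear.has_vector_derivative[OF bounded_linear_vec_nth])

lemma has_real_derivative_zero_interval_const:
  assumes "\<And>s. s \<in> {a..b} \<Longrightarrow> (f has_real_derivative 0) (at s within {a..b})" "s \<in> {a..b}"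
  shows "f s = f a"
proof -
  obtain c where "\<forall>s\<in>{a..b}. f s = c"
    using has_field_derivative_zero_constant[OF convex_real_interval(5) assms(1)] by blast
  then show ?thesis using assms(2) by simp
qed

lemma sch_dom_positive:
  assumes "0 < m" "sch_dom m x"
  shows "0 < x$1" "0 < sch_f m (x$1)" "0 < sin (x$2)"
  using assms by (auto simp: sch_dom_def sch_f_def field_simps intro: sin_gt_zero)

definition sch_gdiag :: "real \<Rightarrow> real^4 \<Rightarrow> 4 \<Rightarrow> real" where
  "sch_gdiag m x i =
     (if i = 0 then - sch_f m (x$1) else if i = 1 then inverse (sch_f m (x$1))
      else if i = 2 then (x$1)^2 else (x$1)^2 * (sin (x$2))^2)"

definition sch_dgdiag :: "real \<Rightarrow> real^4 \<Rightarrow> 4 \<Rightarrow> 4 \<Rightarrow> real" where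
  "sch_dgdiag m x l i =
     (if l = 1 then
        (if i = 0 then - (2 * m / (x$1)^2) else if i = 1 then - (2 * m / (x$1)^2) / (sch_f m (x$1))^2
         else if i = 2 then 2 * x$1 else 2 * x$1 * (sin (x$2))^2)
      else if l = 2 then (if i = 3 then (x$1)^2 * (2 * sin (x$2) * cos (x$2)) else 0)
      else 0)"

lemma sch_gc_diagonal: "sch_gc m x i j = (if i = j then sch_gdiag m x i else 0)"
  using exhaust_4_from_0[of i] exhaust_4_from_0[of j]
  by (auto simp: sch_gc_def sch_g_def sch_gdiag_def axis_def)

lemma sch_ginv_diagonal:
  assumes "0 < m" "sch_dom m x"
  shows "sch_ginv m x k l = (if k = l then inverse (sch_gdiag m x k) else 0)"
proof -
  define B :: "real^4^4" where "B = (\<chi> i j. if i = j then inverse (sch_gdiag m x i) else 0)"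
  have nz: "sch_gdiag m x i \<noteq> 0" for i
    using sch_dom_positive[OF assms] by (auto simp: sch_gdiag_def)
  have "(\<chi> i j. sch_gc m x i j) ** B = mat 1" "B ** (\<chi> i j. sch_gc m x i j) = mat 1"
    using nz unfolding B_def matrix_matrix_mult_def mat_def
    by (simp_all add: vec_eq_iff sch_gc_diagonal sum_if_eq_times)
  then have "matrix_inv (\<chi> i j. sch_gc m x i j) = B" by (rule matrix_inv_unique)
  then show ?thesis unfolding sch_ginv_def B_def by simp
qed

lemma has_real_derivative_sch_gdiag:
  assumes "0 < m" "sch_dom m x"
  shows "((\<lambda>s. sch_gdiag m (x + s *\<^sub>R axis l 1) i) has_real_derivative sch_dgdiag m x l i) (at 0)"
proof -
  note pos = sch_dom_positive[OF assms]
  define a where "a = (if l = 1 then 1 else (0::real))"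
  define b where "b = (if l = 2 then 1 else (0::real))"
  have r: "(x + s *\<^sub>R axis l 1)$1 = x$1 + s * a" and \<theta>: "(x + s *\<^sub>R axis l 1)$2 = x$2 + s * b" for s
    by (simp_all add: a_def b_def axis_def)
  have "x$1 - 2 * m \<noteq> 0" using pos by (auto simp: sch_f_def field_simps)
  then have
    "((\<lambda>s. - sch_f m (x$1 + s * a)) has_real_derivative - (2 * m / (x$1)^2) * a) (at 0)"
    "((\<lambda>s. inverse (sch_f m (x$1 + s * a))) has_real_derivative
        - (2 * m / (x$1)^2) / (sch_f m (x$1))^2 * a) (at 0)"
    "((\<lambda>s. (x$1 + s * a)^2) has_real_derivative 2 * x$1 * a) (at 0)"
    "((\<lambda>s. (x$1 + s * a)^2 * (sin (x$2 + s * b))^2) has_real_derivative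
        2 * x$1 * (sin (x$2))^2 * a + (x$1)^2 * (2 * sin (x$2) * cos (x$2)) * b) (at 0)"
    unfolding sch_f_def using pos
    by (auto intro!: derivative_eq_intros simp: power2_eq_square field_simps)
  then show ?thesis
    unfolding sch_gdiag_def r \<theta> using exhaust_4_from_0[of i]
    by (auto simp: sch_dgdiag_def a_def b_def)
qed

lemma sch_dg_diagonal:
  assumes "0 < m" "sch_dom m x"
  shows "sch_dg m x l i j = (if i = j then sch_dgdiag m x l i else 0)"
  unfolding sch_dg_def sch_gc_diagonal
  using DERIV_imp_deriv[OF has_real_derivative_sch_gdiag[OF assms]] by simp

lemma sch_Gamma_diagonal:
  assumes "0 < m" "sch_dom m x"
  shows "sch_Gamma m x k i j = 1/2 * inverse (sch_gdiag m x k) *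
     ((if k = j then sch_dgdiag m x i k else 0) + (if k = i then sch_dgdiag m x j k else 0)
       - (if i = j then sch_dgdiag m x k i else 0))"
  unfolding sch_Gamma_def sch_ginv_diagonal[OF assms] sch_dg_diagonal[OF assms] sum_if_eq_times
  by (simp add: eq_commute)

lemma sch_christ_components:
  assumes "0 < m" "sch_dom m x"
  defines "f \<equiv> sch_f m (x$1)"
  shows "sch_christ m x A B $ 0 = m / ((x$1)^2 * f) * (A$0 * B$1 + A$1 * B$0)"
    and "sch_christ m x A B $ 1 = f * m / (x$1)^2 * (A$0 * B$0) - m / ((x$1)^2 * f) * (A$1 * B$1)
           - x$1 * f * (A$2 * B$2) - x$1 * f * (sin (x$2))^2 * (A$3 * B$3)"
    and "sch_christ m x A B $ 2 = (A$1 * B$2 + A$2 * B$1) / x$1 - sin (x$2) * cos (x$2) * (A$3 * B$3)"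
    and "sch_christ m x A B $ 3 = (A$1 * B$3 + A$3 * B$1) / x$1
           + cos (x$2) / sin (x$2) * (A$2 * B$3 + A$3 * B$2)"
proof -
  note pos = sch_dom_positive[OF assms(1,2)]
  note christ = sch_christ_def sch_Gamma_diagonal[OF assms(1,2)] sum_4_from_0
    sch_dgdiag_def sch_gdiag_def
  show "sch_christ m x A B $ 0 = m / ((x$1)^2 * f) * (A$0 * B$1 + A$1 * B$0)"
    using pos unfolding f_def by (simp add: christ) (simp add: field_simps power2_eq_square)
  show "sch_christ m x A B $ 1 = f * m / (x$1)^2 * (A$0 * B$0) - m / ((x$1)^2 * f) * (A$1 * B$1)
           - x$1 * f * (A$2 * B$2) - x$1 * f * (sin (x$2))^2 * (A$3 * B$3)"
    using pos unfolding f_def by (simp add: christ) (simp add: field_simps power2_eq_square)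
  show "sch_christ m x A B $ 2 = (A$1 * B$2 + A$2 * B$1) / x$1 - sin (x$2) * cos (x$2) * (A$3 * B$3)"
    using pos by (simp add: christ) (simp add: field_simps power2_eq_square sch_f_def)
  show "sch_christ m x A B $ 3 = (A$1 * B$3 + A$3 * B$1) / x$1
           + cos (x$2) / sin (x$2) * (A$2 * B$3 + A$3 * B$2)"
    using pos by (simp add: christ) (simp add: field_simps power2_eq_square sch_f_def)
qed

lemma sch_g_U:
  assumes "0 < sch_f m (x$1)"
  shows "sch_g m x w (sch_U m x) = - sqrt (sch_f m (x$1)) * w$0"
  using assms unfolding sch_g_def sch_U_def
  by (simp add: axis_def) (simp add: field_simps real_sqrt_divide)

lemma sch_unit_timelike_time_component:
  assumes "0 < m" "sch_dom m x" "sch_g m x w w = -1"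
  shows "1 + (inverse (sch_f m (x$1)) * (w$1)^2 + (x$1)^2 * (w$2)^2
               + (x$1)^2 * (sin (x$2))^2 * (w$3)^2) = sch_f m (x$1) * (w$0)^2"
    and "1 \<le> sch_f m (x$1) * (w$0)^2"
proof -
  show eq: "1 + (inverse (sch_f m (x$1)) * (w$1)^2 + (x$1)^2 * (w$2)^2
               + (x$1)^2 * (sin (x$2))^2 * (w$3)^2) = sch_f m (x$1) * (w$0)^2"
    using assms(3) unfolding sch_g_def by (simp add: power2_eq_square)
  show "1 \<le> sch_f m (x$1) * (w$0)^2"
    unfolding eq[symmetric] using sch_dom_positive[OF assms(1,2)] by simp
qed

text \<open>The relative velocity has no \<open>t\<close>-component and spatial part \<open>w\<^sup>i / (\<surd>f w\<^sup>t)\<close>.\<close>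
lemma sch_g_rel_vel_U:
  assumes "0 < m" "sch_dom m x" "sch_g m x w w = -1"
  shows "sch_g m x (rel_vel m x w (sch_U m x)) (rel_vel m x w (sch_U m x))
           = 1 - 1 / (sch_f m (x$1) * (w$0)^2)"
proof -
  define f where "f = sch_f m (x$1)"
  define s where "s = sqrt f"
  define P where "P = inverse f * (w$1)^2 + (x$1)^2 * (w$2)^2 + (x$1)^2 * (sin (x$2))^2 * (w$3)^2"
  have f: "0 < f" using sch_dom_positive[OF assms(1,2)] by (simp add: f_def)
  then have s: "0 < s" "s * s = f" by (auto simp: s_def)
  have P: "0 \<le> P" using f by (simp add: P_def)
  have fw: "f * (w$0)^2 = 1 + P" and "1 \<le> f * (w$0)^2"
    using sch_unit_timelike_time_component[OF assms] by (simp_all add: f_def P_def)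
  then have w0: "w$0 \<noteq> 0" by auto
  define R where "R = rel_vel m x w (sch_U m x)"
  have gU: "sch_g m x w (sch_U m x) = - (s * w$0)"
    using sch_g_U[of m x w] f by (simp add: f_def s_def)
  have R0: "R$0 = 0"
    unfolding R_def rel_vel_def gU using s w0
    by (simp add: sch_U_def axis_def f_def[symmetric] s_def[symmetric] field_simps)
  have R: "R$1 = w$1 / (s * w$0)" "R$2 = w$2 / (s * w$0)" "R$3 = w$3 / (s * w$0)"
    unfolding R_def rel_vel_def gU by (simp_all add: sch_U_def axis_def)
  have sq: "(a / (s * w$0))^2 = a^2 / (f * (w$0)^2)" for a
    using s by (simp add: power_divide power_mult_distrib power2_eq_square)
  have "sch_g m x R R = inverse f * (R$1)^2 + (x$1)^2 * (R$2)^2 + (x$1)^2 * (sin (x$2))^2 * (R$3)^2"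
    unfolding sch_g_def R0 f_def by (simp add: power2_eq_square)
  also have "\<dots> = P / (f * (w$0)^2)"
    unfolding R sq P_def using f w0 by (simp add: field_simps)
  also have "\<dots> = 1 - 1 / (f * (w$0)^2)" using fw P by (simp add: field_simps)
  finally show ?thesis unfolding R_def f_def .
qed

text \<open>Metric compatibility \<open>\<nabla>g = 0\<close> in coordinates: \<open>2 g(V, \<Gamma>(X,V)) = X(g)(V,V)\<close>.\<close>
lemma sch_g_christ_compatible:
  assumes "0 < m" "sch_dom m x"
  shows "2 * sch_g m x V (sch_christ m x X V)
           = (\<Sum>l\<in>UNIV. X$l * (\<Sum>i\<in>UNIV. sch_dgdiag m x l i * (V$i)^2))"
  using sch_dom_positive[OF assms(1,2)]
  by (simp add: sum_4_from_0 sch_dgdiag_def sch_g_def sch_christ_components[OF assms(1,2)]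
      field_simps power2_eq_square)

lemma has_real_derivative_sch_f:
  assumes "(x has_vector_derivative x') (at s within S)" "0 < x s $ 1"
  shows "((\<lambda>s. sch_f m (x s $ 1)) has_real_derivative 2 * m / (x s $ 1)^2 * x'$1) (at s within S)"
  unfolding sch_f_def using assms(2)
  by (auto intro!: derivative_eq_intros vec_nth_has_real_derivative[OF assms(1)]
      simp: field_simps power2_eq_square)

lemma has_real_derivative_sch_g_along:
  assumes x: "(x has_vector_derivative x') (at s within S)"
    and v: "(v has_vector_derivative v') (at s within S)"
    and "0 < m" "sch_dom m (x s)"
  shows "((\<lambda>s. sch_g m (x s) (v s) (v s)) has_real_derivative
     2 * sch_g m (x s) (v s) v' + (\<Sum>l\<in>UNIV. x'$l * (\<Sum>i\<in>UNIV. sch_dgdiag m (x s) l i * (v s$i)^2)))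
     (at s within S)"
proof -
  note pos = sch_dom_positive[OF assms(3,4)]
  have g: "(\<lambda>s. sch_g m (x s) (v s) (v s)) = (\<lambda>s. - sch_f m (x s $ 1) * (v s $ 0)^2
      + inverse (sch_f m (x s $ 1)) * (v s $ 1)^2
      + (x s $ 1)^2 * (v s $ 2)^2 + (x s $ 1)^2 * (sin (x s $ 2))^2 * (v s $ 3)^2)"
    by (simp add: sch_g_def power2_eq_square fun_eq_iff)
  show ?thesis
    unfolding g using pos
    by (auto intro!: derivative_eq_intros has_real_derivative_sch_f[OF x pos(1)]
        vec_nth_has_real_derivative[OF x] vec_nth_has_real_derivative[OF v]
        simp: sum_4_from_0 sch_dgdiag_def sch_g_def field_simps power2_eq_square)
qed

lemma sch_geodesic_facts:
  assumes "0 < m" "sch_geodesic m \<psi> a b" "s \<in> {a..b}"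
  shows "sch_dom m (\<psi> s)"
    and "(\<psi> has_vector_derivative vector_derivative \<psi> (at s within {a..b})) (at s within {a..b})"
    and "((\<lambda>\<sigma>. vector_derivative \<psi> (at \<sigma> within {a..b})) has_vector_derivative
           - sch_christ m (\<psi> s) (vector_derivative \<psi> (at s within {a..b}))
               (vector_derivative \<psi> (at s within {a..b}))) (at s within {a..b})"
  using assms(2,3) unfolding sch_geodesic_def by (auto simp: vector_derivative_works[symmetric])

text \<open>Conservation of the energy \<open>f \<cdot> dt/ds\<close> associated with the Killing field \<open>\<partial>\<^sub>t\<close>.\<close>
lemma sch_geodesic_energy_const:
  assumes "0 < m" "sch_geodesic m \<psi> a b" "s \<in> {a..b}"
  shows "sch_f m (\<psi> s $ 1) * vector_derivative \<psi> (at s within {a..b}) $ 0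
       = sch_f m (\<psi> a $ 1) * vector_derivative \<psi> (at a within {a..b}) $ 0"
proof -
  define X where "X = (\<lambda>\<sigma>. vector_derivative \<psi> (at \<sigma> within {a..b}))"
  then have X_at: "vector_derivative \<psi> (at \<sigma> within {a..b}) = X \<sigma>" for \<sigma>
    by simp
  have "((\<lambda>s. sch_f m (\<psi> s $ 1) * X s $ 0) has_real_derivative 0) (at s within {a..b})"
    if s: "s \<in> {a..b}" for s
  proof -
    note geo = sch_geodesic_facts[OF assms(1,2) s, unfolded X_at]
    note Df = has_real_derivative_sch_f[OF geo(2) sch_dom_positive(1)[OF assms(1) geo(1)]]
    have "((\<lambda>s. sch_f m (\<psi> s $ 1) * X s $ 0) has_real_derivative
        2 * m / (\<psi> s $ 1)^2 * X s $ 1 * X s $ 0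
        + (- sch_christ m (\<psi> s) (X s) (X s)) $ 0 * sch_f m (\<psi> s $ 1)) (at s within {a..b})"
      by (rule DERIV_mult[OF Df vec_nth_has_real_derivative[OF geo(3)]])
    then show ?thesis
      using sch_dom_positive[OF assms(1) geo(1)]
      by (simp add: sch_christ_components[OF assms(1) geo(1)] field_simps power2_eq_square)
  qed
  from has_real_derivative_zero_interval_const[OF this assms(3)] show ?thesis by (simp add: X_at)
qed

lemma sch_parallel_sqrt_f_time_const:
  assumes "0 < m" "sch_geodesic m \<psi> a b" "sch_parallel m \<psi> V a b" "s \<in> {a..b}"
    and "\<And>\<sigma>. \<sigma> \<in> {a..b} \<Longrightarrow> vector_derivative \<psi> (at \<sigma> within {a..b}) $ 0 = 0"
  shows "sqrt (sch_f m (\<psi> s $ 1)) * V s $ 0 = sqrt (sch_f m (\<psi> a $ 1)) * V a $ 0"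
proof -
  define X where "X = (\<lambda>\<sigma>. vector_derivative \<psi> (at \<sigma> within {a..b}))"
  then have X_at: "vector_derivative \<psi> (at \<sigma> within {a..b}) = X \<sigma>" for \<sigma>
    by simp
  have "((\<lambda>s. sqrt (sch_f m (\<psi> s $ 1)) * V s $ 0) has_real_derivative 0) (at s within {a..b})"
    if s: "s \<in> {a..b}" for s
  proof -
    note geo = sch_geodesic_facts[OF assms(1,2) s, unfolded X_at]
    note Df = has_real_derivative_sch_f[OF geo(2) sch_dom_positive(1)[OF assms(1) geo(1)]]
    note pos = sch_dom_positive[OF assms(1) geo(1)]
    have DV: "(V has_vector_derivative - sch_christ m (\<psi> s) (X s) (V s)) (at s within {a..b})"
      using assms(3) s unfolding sch_parallel_def X_at by auto
    have "((\<lambda>s. sqrt (sch_f m (\<psi> s $ 1))) has_real_derivative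
        inverse (sqrt (sch_f m (\<psi> s $ 1))) / 2 * (2 * m / (\<psi> s $ 1)^2 * X s $ 1)) (at s within {a..b})"
      by (rule DERIV_chain2[OF DERIV_real_sqrt Df]) (use pos in simp)
    then have "((\<lambda>s. sqrt (sch_f m (\<psi> s $ 1)) * V s $ 0) has_real_derivative
       inverse (sqrt (sch_f m (\<psi> s $ 1))) / 2 * (2 * m / (\<psi> s $ 1)^2 * X s $ 1) * V s $ 0
        + (- sch_christ m (\<psi> s) (X s) (V s)) $ 0 * sqrt (sch_f m (\<psi> s $ 1))) (at s within {a..b})"
      by (rule DERIV_mult[OF _ vec_nth_has_real_derivative[OF DV]])
    moreover have "sqrt (sch_f m (\<psi> s $ 1)) * sqrt (sch_f m (\<psi> s $ 1)) = sch_f m (\<psi> s $ 1)"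
      using pos by simp
    ultimately show ?thesis
      using pos assms(5)[OF s]
      by (simp add: X_at sch_christ_components[OF assms(1) geo(1)] field_simps power2_eq_square)
  qed
  from has_real_derivative_zero_interval_const[OF this assms(4)] show ?thesis .
qed

lemma sch_parallel_g_const:
  assumes "0 < m" "sch_geodesic m \<psi> a b" "sch_parallel m \<psi> V a b" "s \<in> {a..b}"
  shows "sch_g m (\<psi> s) (V s) (V s) = sch_g m (\<psi> a) (V a) (V a)"
proof -
  define X where "X = (\<lambda>\<sigma>. vector_derivative \<psi> (at \<sigma> within {a..b}))"
  then have X_at: "vector_derivative \<psi> (at \<sigma> within {a..b}) = X \<sigma>" for \<sigma>
    by simp
  have "((\<lambda>s. sch_g m (\<psi> s) (V s) (V s)) has_real_derivative 0) (at s within {a..b})"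
    if s: "s \<in> {a..b}" for s
  proof -
    note geo = sch_geodesic_facts[OF assms(1,2) s, unfolded X_at]
    have "(V has_vector_derivative - sch_christ m (\<psi> s) (X s) (V s)) (at s within {a..b})"
      using assms(3) s unfolding sch_parallel_def X_at by auto
    note D = has_real_derivative_sch_g_along[OF geo(2) this assms(1) geo(1)]
    have "sch_g m (\<psi> s) (V s) (- w) = - sch_g m (\<psi> s) (V s) w" for w
      by (simp add: sch_g_def)
    then show ?thesis
      using D by (simp add: sch_g_christ_compatible[OF assms(1) geo(1), symmetric])
  qed
  from has_real_derivative_zero_interval_const[OF this assms(4)] show ?thesis .
qed

theorem theorem1:
  fixes m :: real and p q u' :: "real^4"
    and \<psi> V :: "real \<Rightarrow> real^4"
  assumes m_pos: "0 < m"
    and p_dom: "sch_dom m p" and q_dom: "sch_dom m q"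
    and same_t: "q$0 = p$0"
    and u'_vel: "sch_4velocity m q u'"
    and geod: "sch_geodesic m \<psi> 0 1"
    and psi0: "\<psi> 0 = p" and psi1: "\<psi> 1 = q"
    and spacelike: "sch_g m p (vector_derivative \<psi> (at 0 within {0..1}))
                              (vector_derivative \<psi> (at 0 within {0..1})) > 0"
    and orth: "sch_g m p (vector_derivative \<psi> (at 0 within {0..1})) (sch_U m p) = 0"
    and par: "sch_parallel m \<psi> V 0 1"
    and V1: "V 1 = u'"
  shows "(sch_norm m p (rel_vel m p (V 0) (sch_U m p)))^2
           = (sch_norm m q (rel_vel m q u' (sch_U m q)))^2
       \<and> (sch_norm m q (rel_vel m q u' (sch_U m q)))^2
           = 1 - q$1 / ((q$1 - 2 * m) * (u'$0)^2)"
proof -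
  note pos_p = sch_dom_positive[OF m_pos p_dom] and pos_q = sch_dom_positive[OF m_pos q_dom]
  have "vector_derivative \<psi> (at 0 within {0..1}) $ 0 = 0"
    using orth sch_g_U[OF pos_p(2)] pos_p by simp
  then have t_const: "vector_derivative \<psi> (at \<sigma> within {0..1}) $ 0 = 0" if "\<sigma> \<in> {0..1}" for \<sigma>
    using sch_geodesic_energy_const[OF m_pos geod that] sch_dom_positive[OF m_pos
        sch_geodesic_facts(1)[OF m_pos geod that]] by (simp add: psi0)
  have "sqrt (sch_f m (q$1)) * u' $ 0 = sqrt (sch_f m (p$1)) * V 0 $ 0"
    using sch_parallel_sqrt_f_time_const[OF m_pos geod par _ t_const, of 1] psi0 psi1 V1 by simp
  then have energy: "sch_f m (p$1) * (V 0 $ 0)^2 = sch_f m (q$1) * (u' $ 0)^2"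
    using pos_p pos_q by (metis power_mult_distrib real_sqrt_pow2 less_imp_le)
  have gq: "sch_g m q u' u' = -1" using u'_vel by (simp add: sch_4velocity_def)
  then have gp: "sch_g m p (V 0) (V 0) = -1"
    using sch_parallel_g_const[OF m_pos geod par, of 1] psi0 psi1 V1 by simp
  have "0 \<le> 1 - 1 / (sch_f m (q$1) * (u' $ 0)^2)"
    using sch_unit_timelike_time_component(2)[OF m_pos q_dom gq] by simp
  moreover have "1 - 1 / (sch_f m (q$1) * (u' $ 0)^2) = 1 - q$1 / ((q$1 - 2 * m) * (u'$0)^2)"
    using pos_q by (simp add: sch_f_def field_simps)
  ultimately show ?thesis
    unfolding sch_norm_def sch_g_rel_vel_U[OF m_pos p_dom gp] sch_g_rel_vel_U[OF m_pos q_dom gq] energy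
    by simp
qed

end
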